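(* Let $T\ge1$. For $t=0,1,\dots,T$ let $d_t\ge1$, let $M_t\in\mathbb{R}^{d_t\times d_t}$ be symmetric positive definite, and for $t=1,\dots,T$ let $A_t\in\mathbb{R}^{d_t\times d_{t-1}}$, $G_t\in\mathbb{R}^{K_t\times d_t}$, $R_t\in\mathbb{R}^{K_t\times K_t}$ symmetric positive definite, $r_t\in\mathbb{R}^{K_t}$, and define $\ell_t(u)=\frac12\|r_t-G_tu\|^2_{R_t^{-1}}$. Let $\eta_\delta>0$, $m_0\in\mathbb{R}^{d_0}$, and define recursively for $t=1,\dots,T$ $$m_t=\arg\min_{u\in\mathbb{R}^{d_t}}\Big\{\eta_\delta\,\ell_t(u)+\tfrac12\|u-A_tm_{t-1}\|^2_{M_t}\Big\}.$$ Assume there exists $\gamma\in[0,1)$ such that $A_t^\top M_tA_t\preceq\gamma M_{t-1}$ for all $t=1,\dots,T$. Then for any reference sequence $v_0\in\mathbb{R}^{d_0},\dots,v_T\in\mathbb{R}^{d_T}$, $$\sum_{t=1}^T\{\ell_t(m_t)-\ell_t(v_t)\}\le\frac{1}{2\eta_\delta}\|v_0-m_0\|^2_{M_0}+\frac{1}{2\eta_\delta(1-\gamma)}\sum_{t=1}^T\|v_t-A_tv_{t-1}\|^2_{M_t}.$$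
   Context: For a symmetric positive semidefinite matrix $M$, $\|v\|_M^2=v^\top Mv$; $\preceq$ is the Loewner order. In the application, $m_t$ is the posterior mean of a recursive Gaussian discrepancy update with pre-update covariance $P_t=M_t^{-1}$ and pre-update mean $A_tm_{t-1}$. *)

theory Defs
  imports "Jordan_Normal_Form.Gauss_Jordan_Elimination"
begin

definition wnorm2 :: "real mat \<Rightarrow> real vec \<Rightarrow> real" where
  "wnorm2 M v = v \<bullet> (M *\<^sub>v v)"

definition spd :: "nat \<Rightarrow> real mat \<Rightarrow> bool" where
  "spd n M \<longleftrightarrow> M \<in> carrier_mat n n \<and> transpose_mat M = M \<and>
     (\<forall>x \<in> carrier_vec n. x \<noteq> 0\<^sub>v n \<longrightarrow> x \<bullet> (M *\<^sub>v x) > 0)"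

definition spsd :: "nat \<Rightarrow> real mat \<Rightarrow> bool" where
  "spsd n M \<longleftrightarrow> M \<in> carrier_mat n n \<and> transpose_mat M = M \<and>
     (\<forall>x \<in> carrier_vec n. x \<bullet> (M *\<^sub>v x) \<ge> 0)"

definition loewner_le :: "nat \<Rightarrow> real mat \<Rightarrow> real mat \<Rightarrow> bool" where
  "loewner_le n M N \<longleftrightarrow> spsd n (N - M)"

text \<open>Matrix inverse (R is invertible in the application, being SPD).\<close>
definition minv :: "real mat \<Rightarrow> real mat" where
  "minv R = the (mat_inverse R)"

definition loss :: "real mat \<Rightarrow> real mat \<Rightarrow> real vec \<Rightarrow> real vec \<Rightarrow> real" where
  "loss G R r u = (1/2) * wnorm2 (minv R) (r - G *\<^sub>v u)"

end

theory Submission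
  imports Defs "Jordan_Normal_Form.Determinant"
begin

(* Each update is a proximal step on a convex quadratic, so m_t satisfies the three-point
   inequality f(u) >= f(m_t) + 1/2 |u - m_t|^2_{M_t} for the step objective f. Splitting
   v_t - A_t m_{t-1} = (v_t - A_t v_{t-1}) + A_t (v_{t-1} - m_{t-1}), the contraction hypothesis
   bounds the second part by gamma |v_{t-1} - m_{t-1}|^2_{M_{t-1}}, and the weighted Young
   inequality |a + b|^2 <= |b|^2 / gamma + |a|^2 / (1 - gamma) turns the per-step regret into a
   telescoping difference of the tracking errors |v_t - m_t|^2_{M_t} plus the path-length term
   |v_t - A_t v_{t-1}|^2_{M_t} / (1 - gamma). *)

lemma nonneg_quadratic_discriminant:
  fixes a b c :: real
  assumes nonneg: "\<And>e. 0 \<le> a * e\<^sup>2 + b * e + c" and "0 \<le> a"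
  shows "b\<^sup>2 \<le> 4 * a * c"
proof (cases "a = 0")
  case True
  have "b = 0"
  proof (rule ccontr)
    assume "b \<noteq> 0"
    then have "a * (- (c + 1) / b)\<^sup>2 + b * (- (c + 1) / b) + c = -1"
      using True by simp
    with nonneg[of "- (c + 1) / b"] show False by linarith
  qed
  with True show ?thesis by simp
next
  case False
  with assms have a: "0 < a" by simp
  have "0 \<le> a * (- b / (2 * a))\<^sup>2 + b * (- b / (2 * a)) + c" by (rule nonneg)
  also have "\<dots> = c - b\<^sup>2 / (4 * a)" using a by (simp add: field_simps power2_eq_square)
  finally show ?thesis using a by (simp add: field_simps)
qed

lemma two_mult_le_add_if_square_le_mult:
  fixes b x y :: real
  assumes "0 \<le> x" "0 \<le> y" "b\<^sup>2 \<le> x * y"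
  shows "2 * b \<le> x + y"
proof (rule power2_le_imp_le)
  have "(x + y)\<^sup>2 - (2 * b)\<^sup>2 = (x - y)\<^sup>2 + 4 * (x * y - b\<^sup>2)"
    by (simp add: power2_eq_square algebra_simps)
  also have "\<dots> \<ge> 0" using assms by simp
  finally show "(2 * b)\<^sup>2 \<le> (x + y)\<^sup>2" by simp
qed (use assms in simp)

lemma spd_imp_spsd: "spd n M \<Longrightarrow> spsd n M"
  unfolding spd_def spsd_def
  by (metis less_imp_le mult_mat_vec_carrier order_refl scalar_prod_left_zero)

lemma wnorm2_nonneg: "spsd n M \<Longrightarrow> x \<in> carrier_vec n \<Longrightarrow> 0 \<le> wnorm2 M x"
  unfolding spsd_def wnorm2_def by blast

lemma spd_imp_spsd_minv:
  assumes "spd n R"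
  shows "spsd n (minv R)"
proof -
  have R: "R \<in> carrier_mat n n" and R_sym: "transpose_mat R = R"
    and R_pos: "\<And>x. x \<in> carrier_vec n \<Longrightarrow> x \<noteq> 0\<^sub>v n \<Longrightarrow> 0 < x \<bullet> (R *\<^sub>v x)"
    using assms unfolding spd_def by auto
  have "det R \<noteq> 0"
  proof
    assume "det R = 0"
    then obtain w where "w \<in> carrier_vec n" "w \<noteq> 0\<^sub>v n" "R *\<^sub>v w = 0\<^sub>v n"
      using det_0_iff_vec_prod_zero_field[OF R] by blast
    with R_pos[of w] show False by simp
  qed
  then have "R \<in> Units (ring_mat TYPE(real) n ())" by (rule det_non_zero_imp_unit[OF R])
  then obtain B where "mat_inverse R = Some B"
    using mat_inverse(1)[OF R] by fastforce
  then have B: "B \<in> carrier_mat n n" and RB: "R * B = 1\<^sub>m n" and minv_R: "minv R = B"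
    using mat_inverse(2)[OF R] unfolding minv_def by auto
  have "transpose_mat B * R = 1\<^sub>m n"
    using transpose_mult[OF R B] RB R_sym by simp
  then have "transpose_mat B = B"
    using B R RB by (metis assoc_mult_mat left_mult_one_mat right_mult_one_mat transpose_carrier_mat)
  moreover have "0 \<le> x \<bullet> (B *\<^sub>v x)" if x: "x \<in> carrier_vec n" for x
  proof -
    define y where "y = B *\<^sub>v x"
    have y: "y \<in> carrier_vec n" unfolding y_def using B x by simp
    have "R *\<^sub>v y = x" unfolding y_def using R B x RB by (simp flip: assoc_mult_mat_vec)
    then have "x \<bullet> (B *\<^sub>v x) = y \<bullet> (R *\<^sub>v y)"
      unfolding y_def[symmetric] using R y by (metis comm_scalar_prod mult_mat_vec_carrier)
    then show ?thesis using R_pos[OF y] R y by (cases "y = 0\<^sub>v n") auto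
  qed
  ultimately show ?thesis unfolding spsd_def minv_R using B by blast
qed

lemma wnorm2_add_smult:
  assumes W: "W \<in> carrier_mat n n" and x: "x \<in> carrier_vec n" and y: "y \<in> carrier_vec n"
  shows "wnorm2 W (x + e \<cdot>\<^sub>v y)
    = wnorm2 W x + e * (x \<bullet> (W *\<^sub>v y) + y \<bullet> (W *\<^sub>v x)) + e\<^sup>2 * wnorm2 W y"
proof -
  have "W *\<^sub>v (x + e \<cdot>\<^sub>v y) = W *\<^sub>v x + e \<cdot>\<^sub>v (W *\<^sub>v y)"
    using W x y by (simp add: mult_add_distrib_mat_vec mult_mat_vec)
  then show ?thesis
    unfolding wnorm2_def using W x y
    by (simp add: add_scalar_prod_distrib[of _ n] scalar_prod_add_distrib[of _ n]
        power2_eq_square algebra_simps)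
qed

lemma scalar_prod_mult_mat_vec_sym:
  assumes W: "W \<in> carrier_mat n n" "transpose_mat W = W"
    and x: "x \<in> carrier_vec n" and y: "y \<in> carrier_vec n"
  shows "y \<bullet> (W *\<^sub>v x) = x \<bullet> (W *\<^sub>v (y :: real vec))"
  using transpose_vec_mult_scalar[OF W(1) x y] W x y by (metis comm_scalar_prod mult_mat_vec_carrier)

lemma wnorm2_add_smult_sym:
  assumes "spsd n W" "x \<in> carrier_vec n" "y \<in> carrier_vec n"
  shows "wnorm2 W (x + e \<cdot>\<^sub>v y) = wnorm2 W x + 2 * e * (x \<bullet> (W *\<^sub>v y)) + e\<^sup>2 * wnorm2 W y"
  using assms wnorm2_add_smult[of W n x y e] scalar_prod_mult_mat_vec_sym[of W n x y]
  unfolding spsd_def by simp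

lemma spsd_cauchy_schwarz:
  assumes W: "spsd n W" and x: "x \<in> carrier_vec n" and y: "y \<in> carrier_vec n"
  shows "(x \<bullet> (W *\<^sub>v y))\<^sup>2 \<le> wnorm2 W x * wnorm2 W y"
proof -
  have "0 \<le> wnorm2 W y * e\<^sup>2 + 2 * (x \<bullet> (W *\<^sub>v y)) * e + wnorm2 W x" for e
    using wnorm2_nonneg[OF W, of "x + e \<cdot>\<^sub>v y"] wnorm2_add_smult_sym[OF W x y, of e] x y
    by (simp add: algebra_simps)
  then have "(2 * (x \<bullet> (W *\<^sub>v y)))\<^sup>2 \<le> 4 * wnorm2 W y * wnorm2 W x"
    by (rule nonneg_quadratic_discriminant) (rule wnorm2_nonneg[OF W y])
  then show ?thesis by (simp add: power_mult_distrib mult_ac)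
qed

lemma wnorm2_add_le:
  fixes \<gamma> P :: real
  assumes W: "spsd n W" and a: "a \<in> carrier_vec n" and b: "b \<in> carrier_vec n"
    and \<gamma>: "0 \<le> \<gamma>" "\<gamma> < 1" and P: "0 \<le> P" and b_le: "wnorm2 W b \<le> \<gamma> * P"
  shows "wnorm2 W (a + b) \<le> P + wnorm2 W a / (1 - \<gamma>)"
proof -
  \<comment> \<open>Young's inequality with weight \<gamma> would divide by \<gamma>; Cauchy-Schwarz followed by AM-GM
    with the factors below also covers \<gamma> = 0\<close>
  define x where "x = (1 - \<gamma>) * P"
  define y where "y = \<gamma> * wnorm2 W a / (1 - \<gamma>)"
  have a_nonneg: "0 \<le> wnorm2 W a" by (rule wnorm2_nonneg[OF W a])
  have "(a \<bullet> (W *\<^sub>v b))\<^sup>2 \<le> wnorm2 W a * (\<gamma> * P)"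
    using spsd_cauchy_schwarz[OF W a b] b_le a_nonneg by (meson mult_left_mono order_trans)
  also have "\<dots> = x * y" unfolding x_def y_def using \<gamma> by (simp add: field_simps)
  finally have "2 * (a \<bullet> (W *\<^sub>v b)) \<le> x + y"
    using two_mult_le_add_if_square_le_mult a_nonneg \<gamma> P unfolding x_def y_def by simp
  moreover have "wnorm2 W (a + b) = wnorm2 W a + 2 * (a \<bullet> (W *\<^sub>v b)) + wnorm2 W b"
    using wnorm2_add_smult_sym[OF W a b, of 1] by simp
  moreover have "wnorm2 W a + x + y + \<gamma> * P = P + wnorm2 W a / (1 - \<gamma>)"
    unfolding x_def y_def using \<gamma> by (simp add: field_simps)
  ultimately show ?thesis using b_le by linarith
qed

lemma loewner_le_imp_wnorm2_le:
  assumes "loewner_le n P Q" "P \<in> carrier_mat n n" "Q \<in> carrier_mat n n" "x \<in> carrier_vec n"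
  shows "wnorm2 P x \<le> wnorm2 Q x"
proof -
  have "0 \<le> x \<bullet> ((Q - P) *\<^sub>v x)" using assms unfolding loewner_le_def spsd_def by blast
  also have "\<dots> = wnorm2 Q x - wnorm2 P x"
    unfolding wnorm2_def using assms
    by (simp add: minus_mult_distrib_mat_vec scalar_prod_minus_distrib[of _ n])
  finally show ?thesis by simp
qed

lemma wnorm2_transpose_mult_mult:
  assumes A: "A \<in> carrier_mat n p" and M: "M \<in> carrier_mat n n" and x: "x \<in> carrier_vec p"
  shows "wnorm2 (transpose_mat A * M * A) x = wnorm2 M (A *\<^sub>v x)"
proof -
  have "(transpose_mat A * M * A) *\<^sub>v x = (transpose_mat A * M) *\<^sub>v (A *\<^sub>v x)"
    by (rule assoc_mult_mat_vec) (use A M x in auto)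
  also have "\<dots> = transpose_mat A *\<^sub>v (M *\<^sub>v (A *\<^sub>v x))"
    by (rule assoc_mult_mat_vec) (use A M x in auto)
  finally have "wnorm2 (transpose_mat A * M * A) x = x \<bullet> (transpose_mat A *\<^sub>v (M *\<^sub>v (A *\<^sub>v x)))"
    unfolding wnorm2_def by simp
  also have "\<dots> = (transpose_mat A *\<^sub>v (M *\<^sub>v (A *\<^sub>v x))) \<bullet> x"
    by (rule comm_scalar_prod[of _ p]) (use A M x in auto)
  also have "\<dots> = (M *\<^sub>v (A *\<^sub>v x)) \<bullet> (A *\<^sub>v x)"
    by (rule transpose_vec_mult_scalar) (use A M x in auto)
  also have "\<dots> = wnorm2 M (A *\<^sub>v x)"
    unfolding wnorm2_def by (rule comm_scalar_prod[of _ n]) (use A M x in auto)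
  finally show ?thesis .
qed

lemma wnorm2_smult_mat:
  assumes M: "M \<in> carrier_mat n n" and x: "x \<in> carrier_vec n"
  shows "wnorm2 (k \<cdot>\<^sub>m M) x = k * wnorm2 M x"
proof -
  have "(k \<cdot>\<^sub>m M) *\<^sub>v x = k \<cdot>\<^sub>v (M *\<^sub>v x)" using M x by (intro eq_vecI) auto
  then show ?thesis unfolding wnorm2_def using M x by simp
qed

lemma quadratic_prox_three_point:
  fixes \<eta> :: real and W M G :: "real mat" and r c :: "real vec"
  defines "f \<equiv> \<lambda>u. \<eta> * (1/2 * wnorm2 W (r - G *\<^sub>v u)) + 1/2 * wnorm2 M (u - c)"
  assumes W: "spsd k W" and M: "spsd n M" and G: "G \<in> carrier_mat k n" and r: "r \<in> carrier_vec k"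
    and c: "c \<in> carrier_vec n" and m: "m \<in> carrier_vec n" and v: "v \<in> carrier_vec n"
    and \<eta>: "0 \<le> \<eta>" and min: "\<And>u. u \<in> carrier_vec n \<Longrightarrow> f m \<le> f u"
  shows "f m + 1/2 * wnorm2 M (v - m) \<le> f v"
proof -
  have Wc: "W \<in> carrier_mat k k" and Mc: "M \<in> carrier_mat n n"
    using W M unfolding spsd_def by auto
  define s where "s = v - m"
  define x where "x = r - G *\<^sub>v m"
  define y where "y = - (G *\<^sub>v s)"
  have s: "s \<in> carrier_vec n" and x: "x \<in> carrier_vec k" and y: "y \<in> carrier_vec k"
    and mc: "m - c \<in> carrier_vec n"
    unfolding s_def x_def y_def using G r m v c by auto
  define L where "L = \<eta> / 2 * (x \<bullet> (W *\<^sub>v y) + y \<bullet> (W *\<^sub>v x))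
    + 1/2 * ((m - c) \<bullet> (M *\<^sub>v s) + s \<bullet> (M *\<^sub>v (m - c)))"
  define Q where "Q = \<eta> / 2 * wnorm2 W y + 1/2 * wnorm2 M s"
  have Q: "0 \<le> Q" unfolding Q_def using wnorm2_nonneg[OF W y] wnorm2_nonneg[OF M s] \<eta> by simp
  have expand: "f (m + e \<cdot>\<^sub>v s) = f m + e * L + e\<^sup>2 * Q" for e
  proof -
    have "r - G *\<^sub>v (m + e \<cdot>\<^sub>v s) = x + e \<cdot>\<^sub>v y"
      unfolding x_def y_def using G r m s
      by (intro eq_vecI) (auto simp: mult_add_distrib_mat_vec mult_mat_vec)
    moreover have "m + e \<cdot>\<^sub>v s - c = (m - c) + e \<cdot>\<^sub>v s"
      using c m s by (intro eq_vecI) auto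
    ultimately show ?thesis
      unfolding f_def L_def Q_def x_def[symmetric]
      using wnorm2_add_smult[OF Wc x y] wnorm2_add_smult[OF Mc mc s] by (simp add: algebra_simps)
  qed
  \<comment> \<open>minimality of m along the line through m and v kills the linear coefficient\<close>
  have "0 \<le> Q * e\<^sup>2 + L * e + 0" for e
    using min[of "m + e \<cdot>\<^sub>v s"] expand[of e] m s by (simp add: algebra_simps)
  then have "L\<^sup>2 \<le> 4 * Q * 0" using Q by (rule nonneg_quadratic_discriminant)
  then have "L = 0" by simp
  moreover have "m + 1 \<cdot>\<^sub>v s = v" unfolding s_def using m v by (intro eq_vecI) auto
  ultimately have "f v = f m + Q" using expand[of 1] by simp
  then show ?thesis unfolding Q_def s_def using wnorm2_nonneg[OF W y] \<eta> by simp
qed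

lemma prox_step_regret_bound:
  fixes \<eta> \<gamma> :: real
  assumes A: "A \<in> carrier_mat n p" and G: "G \<in> carrier_mat k n" and R: "spd k R"
    and r: "r \<in> carrier_vec k" and M: "spd n M" and M': "spd p M'"
    and \<eta>: "0 < \<eta>" and \<gamma>: "0 \<le> \<gamma>" "\<gamma> < 1"
    and contr: "loewner_le p (transpose_mat A * M * A) (\<gamma> \<cdot>\<^sub>m M')"
    and m': "m' \<in> carrier_vec p" and v': "v' \<in> carrier_vec p"
    and m: "m \<in> carrier_vec n" and v: "v \<in> carrier_vec n"
    and min: "\<And>u. u \<in> carrier_vec n \<Longrightarrow>
      \<eta> * loss G R r m + 1/2 * wnorm2 M (m - A *\<^sub>v m')
      \<le> \<eta> * loss G R r u + 1/2 * wnorm2 M (u - A *\<^sub>v m')"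
  shows "2 * \<eta> * (loss G R r m - loss G R r v)
    \<le> wnorm2 M' (v' - m') - wnorm2 M (v - m) + wnorm2 M (v - A *\<^sub>v v') / (1 - \<gamma>)"
proof -
  have M_psd: "spsd n M" and M'_psd: "spsd p M'" using M M' by (auto intro: spd_imp_spsd)
  have Mc: "M \<in> carrier_mat n n" and M'c: "M' \<in> carrier_mat p p"
    using M M' unfolding spd_def by auto
  define c where "c = A *\<^sub>v m'"
  have c: "c \<in> carrier_vec n" unfolding c_def using A m' by simp
  have three_point: "\<eta> * loss G R r m + 1/2 * wnorm2 M (m - c) + 1/2 * wnorm2 M (v - m)
      \<le> \<eta> * loss G R r v + 1/2 * wnorm2 M (v - c)"
    using quadratic_prox_three_point[OF spd_imp_spsd_minv[OF R] M_psd G r c m v] \<eta> min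
    unfolding c_def loss_def by simp
  have split: "v - c = (v - A *\<^sub>v v') + A *\<^sub>v (v' - m')"
    unfolding c_def using A v v' m' by (intro eq_vecI) (auto simp: mult_minus_distrib_mat_vec)
  have "wnorm2 M (A *\<^sub>v (v' - m')) \<le> \<gamma> * wnorm2 M' (v' - m')"
    using loewner_le_imp_wnorm2_le[OF contr _ _ minus_carrier_vec[OF v' m']]
      wnorm2_transpose_mult_mult[OF A Mc] wnorm2_smult_mat[OF M'c] A Mc M'c v' m'
    by simp
  then have "wnorm2 M (v - c) \<le> wnorm2 M' (v' - m') + wnorm2 M (v - A *\<^sub>v v') / (1 - \<gamma>)"
    unfolding split using A v v' m' wnorm2_nonneg[OF M'_psd, of "v' - m'"]
    by (intro wnorm2_add_le[OF M_psd _ _ \<gamma>]) auto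
  moreover have "0 \<le> wnorm2 M (m - c)" using wnorm2_nonneg[OF M_psd] m c by simp
  moreover have "2 * \<eta> * (loss G R r m - loss G R r v)
      = 2 * (\<eta> * loss G R r m) - 2 * (\<eta> * loss G R r v)"
    by (simp add: algebra_simps)
  ultimately show ?thesis using three_point by linarith
qed

theorem theorem1:
  fixes T :: nat and d K :: "nat \<Rightarrow> nat"
    and M A G R :: "nat \<Rightarrow> real mat" and r m v :: "nat \<Rightarrow> real vec"
    and \<eta> \<gamma> :: real
  assumes T1: "T \<ge> 1"
    and d_pos: "\<forall>t \<le> T. d t \<ge> 1"
    and M_spd: "\<forall>t \<le> T. spd (d t) (M t)"
    and A_dim: "\<forall>t \<in> {1..T}. A t \<in> carrier_mat (d t) (d (t - 1))"
    and G_dim: "\<forall>t \<in> {1..T}. G t \<in> carrier_mat (K t) (d t)"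
    and R_spd: "\<forall>t \<in> {1..T}. spd (K t) (R t)"
    and r_dim: "\<forall>t \<in> {1..T}. r t \<in> carrier_vec (K t)"
    and eta_pos: "\<eta> > 0"
    and m0: "m 0 \<in> carrier_vec (d 0)"
    and m_argmin: "\<forall>t \<in> {1..T}. m t \<in> carrier_vec (d t) \<and>
        (\<forall>u \<in> carrier_vec (d t).
           \<eta> * loss (G t) (R t) (r t) (m t) + (1/2) * wnorm2 (M t) (m t - A t *\<^sub>v m (t - 1))
         \<le> \<eta> * loss (G t) (R t) (r t) u + (1/2) * wnorm2 (M t) (u - A t *\<^sub>v m (t - 1)))"
    and gamma: "0 \<le> \<gamma>" "\<gamma> < 1"
    and contr: "\<forall>t \<in> {1..T}. loewner_le (d (t - 1))
                  (transpose_mat (A t) * M t * A t) (\<gamma> \<cdot>\<^sub>m M (t - 1))"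
    and v_dim: "\<forall>t \<le> T. v t \<in> carrier_vec (d t)"
  shows "(\<Sum>t = 1..T. loss (G t) (R t) (r t) (m t) - loss (G t) (R t) (r t) (v t))
         \<le> 1 / (2 * \<eta>) * wnorm2 (M 0) (v 0 - m 0)
           + 1 / (2 * \<eta> * (1 - \<gamma>)) * (\<Sum>t = 1..T. wnorm2 (M t) (v t - A t *\<^sub>v v (t - 1)))"
proof -
  define P where "P t = wnorm2 (M t) (v t - m t)" for t
  define D where "D t = wnorm2 (M t) (v t - A t *\<^sub>v v (t - 1))" for t
  define regret where "regret t = loss (G t) (R t) (r t) (m t) - loss (G t) (R t) (r t) (v t)" for t
  have m_dim: "m t \<in> carrier_vec (d t)" if "t \<le> T" for t
    using m0 m_argmin that by (cases "t = 0") auto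
  have "2 * \<eta> * regret t \<le> P (t - 1) - P t + D t / (1 - \<gamma>)" if t: "t \<in> {1..T}" for t
    unfolding regret_def P_def D_def
  proof (rule prox_step_regret_bound[where n = "d t" and p = "d (t - 1)" and k = "K t"])
    show "\<And>u. u \<in> carrier_vec (d t) \<Longrightarrow>
      \<eta> * loss (G t) (R t) (r t) (m t) + 1/2 * wnorm2 (M t) (m t - A t *\<^sub>v m (t - 1))
      \<le> \<eta> * loss (G t) (R t) (r t) u + 1/2 * wnorm2 (M t) (u - A t *\<^sub>v m (t - 1))"
      using m_argmin t by blast
  qed (use t A_dim G_dim R_spd r_dim M_spd eta_pos gamma contr v_dim m_dim in auto)
  then have "2 * \<eta> * (\<Sum>t = 1..T. regret t) \<le> (\<Sum>t = 1..T. P (t - 1) - P t + D t / (1 - \<gamma>))"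
    by (auto simp: sum_distrib_left intro: sum_mono)
  also have "\<dots> = P 0 - P T + (\<Sum>t = 1..T. D t) / (1 - \<gamma>)"
    using sum_telescope''[of 0 T "\<lambda>t. - P t"] by (simp add: sum.distrib sum_divide_distrib)
  also have "\<dots> \<le> P 0 + (\<Sum>t = 1..T. D t) / (1 - \<gamma>)"
    using wnorm2_nonneg[OF spd_imp_spsd, of "d T" "M T" "v T - m T"] M_spd v_dim m_dim
    unfolding P_def by simp
  finally have "(\<Sum>t = 1..T. regret t) \<le> (P 0 + (\<Sum>t = 1..T. D t) / (1 - \<gamma>)) / (2 * \<eta>)"
    using eta_pos by (simp add: pos_le_divide_eq mult.commute)
  also have "\<dots> = 1 / (2 * \<eta>) * P 0 + 1 / (2 * \<eta> * (1 - \<gamma>)) * (\<Sum>t = 1..T. D t)"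
    using eta_pos gamma by (simp add: field_simps)
  finally show ?thesis unfolding regret_def P_def D_def .
qed

end
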